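(* In a finite dynamic game as described in the context, let $K^i$ be unilaterally sufficient information for player $i$, with associated functions $F_t^{i,g^i}$. For every behavioral strategy $g^i$ of player $i$, let $\rho^i$ be the $K^i$-based strategy given by $$\rho_t^i(u_t^i\mid k_t^i)=\sum_{\tilde h_t^i\in\mathcal{H}_t^i}g_t^i(u_t^i\mid\tilde h_t^i)\,F_t^{i,g^i}(\tilde h_t^i\mid k_t^i).$$ Then $J^j(g^i,g^{-i})=J^j(\rho^i,g^{-i})$ for all players $j\in\mathcal{I}$ and all behavioral strategy profiles $g^{-i}$ of the players other than $i$.
   Context: Game model: finite set of players $\mathcal{I}$, times $\mathcal{T}=\{1,\dots,T\}$. At time $t$ each player $i$ takes action $U_t^i\in\mathcal{U}_t^i$, obtains reward $R_t^i\in[-1,1]$ and learns new information $Z_t^i\in\mathcal{Z}_t^i$. There is a state $X_t\in\mathcal{X}_t$ with $(X_{t+1},Z_t,R_t)=f_t(X_t,U_t,W_t)$ for fixed functions $f_t$. Primitive random variables $(X_1,H_1)$ and $W_1,\dots,W_T$ are mutually independent with commonly known distributions. All sets are finite. Perfect recall: $H_t^i=(H_1^i,Z_{1:t-1}^i)\in\mathcal{H}_t^i$, and $U_t^i$ is a component of $Z_t^i$. Behavioral strategy $g_t^i:\mathcal{H}_t^i\to\Delta(\mathcal{U}_t^i)$; payoff $J^j(g)=\mathbb{E}^g[\sum_t R_t^j]$. A realization is admissible under $g$ if it has positive probability under $g$. Compression: $K_1^i=\iota_1^i(H_1^i)$, $K_t^i=\iota_t^i(K_{t-1}^i,Z_{t-1}^i)$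 for fixed maps, finite value sets $\mathcal{K}_t^i$; $k_t^i$ is the compression of $h_t^i$; a $K^i$-based strategy has $\rho_t^i:\mathcal{K}_t^i\to\Delta(\mathcal{U}_t^i)$. Unilaterally sufficient information (USI): $K^i$ is USI for player $i$ if there exist $F_t^{i,g^i}:\mathcal{K}_t^i\to\Delta(\mathcal{H}_t^i)$ depending only on $g^i$ and $\Phi_t^{i,g^{-i}}:\mathcal{K}_t^i\to\Delta(\mathcal{X}_t\times\mathcal{H}_t^{-i})$ depending only on $g^{-i}$ with $\Pr^g(x_t,h_t\mid k_t^i)=F_t^{i,g^i}(h_t^i\mid k_t^i)\Phi_t^{i,g^{-i}}(x_t,h_t^{-i}\mid k_t^i)$ for all behavioral profiles $g$, all $t$, all $k_t^i$ admissible under $g$ (with $x_t,h_t^i,h_t^{-i}$ ranging independently; the left side is $0$ if they disagree on shared components). *)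

theory Defs
  imports "HOL-Probability.Probability"
begin

text \<open>
Players: finite type 'p.  Times 1..T (natural numbers).
States 'x, actions 'u, new information 'z, noise 'w, initial private information 'h,
compressed information 'k (all finite types).  The time- and player-dependent
action sets are given by A t i.
The dynamics f t x u w = (X_{t+1}, Z_t, R_t).
P0 is the joint law of (X_1, H_1) and PW t the law of W_t (all mutually independent by
construction of the process below).
A history of player i at time t is H_t^i = (H_1^i, [Z_1^i, ..., Z_{t-1}^i]).
\<close>

type_synonym ('h, 'z) hist = "'h \<times> 'z list"

definition Hset :: "nat \<Rightarrow> ('h, 'z) hist set" where
  "Hset t = {h. length (snd h) = t - 1}"

definition behavioral ::
  "(nat \<Rightarrow> 'p \<Rightarrow> 'u set) \<Rightarrow> ('p \<Rightarrow> nat \<Rightarrow> ('h, 'z) hist \<Rightarrow> 'u pmf) \<Rightarrow> bool" where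
  "behavioral A g \<longleftrightarrow> (\<forall>i t h. set_pmf (g i t h) \<subseteq> A t i)"

text \<open>Process state: (X_t, (H_t^i)_i, cumulative rewards up to time t-1).\<close>
definition init_state ::
  "('x \<times> ('p \<Rightarrow> 'h)) pmf \<Rightarrow> ('x \<times> ('p \<Rightarrow> ('h, 'z) hist) \<times> ('p \<Rightarrow> real)) pmf" where
  "init_state P0 = map_pmf (\<lambda>(x, h1). (x, \<lambda>i. (h1 i, []), \<lambda>i. 0)) P0"

definition step ::
  "(nat \<Rightarrow> 'x \<Rightarrow> ('p::finite \<Rightarrow> 'u) \<Rightarrow> 'w \<Rightarrow> 'x \<times> ('p \<Rightarrow> 'z) \<times> ('p \<Rightarrow> real))
   \<Rightarrow> (nat \<Rightarrow> 'w pmf) \<Rightarrow> ('p \<Rightarrow> nat \<Rightarrow> ('h, 'z) hist \<Rightarrow> 'u pmf) \<Rightarrow> nat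
   \<Rightarrow> 'x \<times> ('p \<Rightarrow> ('h, 'z) hist) \<times> ('p \<Rightarrow> real)
   \<Rightarrow> ('x \<times> ('p \<Rightarrow> ('h, 'z) hist) \<times> ('p \<Rightarrow> real)) pmf" where
  "step f PW g t s =
     (case s of (x, h, c) \<Rightarrow>
       bind_pmf (Pi_pmf UNIV undefined (\<lambda>i. g i t (h i))) (\<lambda>u.
       bind_pmf (PW t) (\<lambda>w.
         (case f t x u w of (x', z, r) \<Rightarrow>
            return_pmf (x', \<lambda>i. (fst (h i), snd (h i) @ [z i]), \<lambda>i. c i + r i)))))"

text \<open>run ... g n is the law of the process state at time n+1.\<close>
primrec run ::
  "('x \<times> ('p \<Rightarrow> 'h)) pmf
   \<Rightarrow> (nat \<Rightarrow> 'x \<Rightarrow> ('p::finite \<Rightarrow> 'u) \<Rightarrow> 'w \<Rightarrow> 'x \<times> ('p \<Rightarrow> 'z) \<times> ('p \<Rightarrow> real))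
   \<Rightarrow> (nat \<Rightarrow> 'w pmf) \<Rightarrow> ('p \<Rightarrow> nat \<Rightarrow> ('h, 'z) hist \<Rightarrow> 'u pmf) \<Rightarrow> nat
   \<Rightarrow> ('x \<times> ('p \<Rightarrow> ('h, 'z) hist) \<times> ('p \<Rightarrow> real)) pmf" where
  "run P0 f PW g 0 = init_state P0"
| "run P0 f PW g (Suc n) = bind_pmf (run P0 f PW g n) (step f PW g (Suc n))"

definition XH ::
  "('x \<times> ('p \<Rightarrow> 'h)) pmf
   \<Rightarrow> (nat \<Rightarrow> 'x \<Rightarrow> ('p::finite \<Rightarrow> 'u) \<Rightarrow> 'w \<Rightarrow> 'x \<times> ('p \<Rightarrow> 'z) \<times> ('p \<Rightarrow> real))
   \<Rightarrow> (nat \<Rightarrow> 'w pmf) \<Rightarrow> ('p \<Rightarrow> nat \<Rightarrow> ('h, 'z) hist \<Rightarrow> 'u pmf) \<Rightarrow> nat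
   \<Rightarrow> ('x \<times> ('p \<Rightarrow> ('h, 'z) hist)) pmf" where
  "XH P0 f PW g t = map_pmf (\<lambda>(x, h, c). (x, h)) (run P0 f PW g (t - 1))"

definition payoff ::
  "nat \<Rightarrow> ('x \<times> ('p \<Rightarrow> 'h)) pmf
   \<Rightarrow> (nat \<Rightarrow> 'x \<Rightarrow> ('p::finite \<Rightarrow> 'u) \<Rightarrow> 'w \<Rightarrow> 'x \<times> ('p \<Rightarrow> 'z) \<times> ('p \<Rightarrow> real))
   \<Rightarrow> (nat \<Rightarrow> 'w pmf) \<Rightarrow> ('p \<Rightarrow> nat \<Rightarrow> ('h, 'z) hist \<Rightarrow> 'u pmf) \<Rightarrow> 'p \<Rightarrow> real" where
  "payoff T P0 f PW g j = measure_pmf.expectation (run P0 f PW g T) (\<lambda>(x, h, c). c j)"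

text \<open>Compression: K_1^i = iota1 i H_1^i, K_t^i = iota t i K_{t-1}^i Z_{t-1}^i.
  kseq ... h1 zs n computes K_{n+1}^i.\<close>
primrec kseq ::
  "('p \<Rightarrow> 'h \<Rightarrow> 'k) \<Rightarrow> (nat \<Rightarrow> 'p \<Rightarrow> 'k \<Rightarrow> 'z \<Rightarrow> 'k) \<Rightarrow> 'p \<Rightarrow> 'h \<Rightarrow> 'z list \<Rightarrow> nat \<Rightarrow> 'k" where
  "kseq iota1 iota i h1 zs 0 = iota1 i h1"
| "kseq iota1 iota i h1 zs (Suc n) = iota (Suc (Suc n)) i (kseq iota1 iota i h1 zs n) (zs ! n)"

definition compr ::
  "('p \<Rightarrow> 'h \<Rightarrow> 'k) \<Rightarrow> (nat \<Rightarrow> 'p \<Rightarrow> 'k \<Rightarrow> 'z \<Rightarrow> 'k) \<Rightarrow> 'p \<Rightarrow> ('h, 'z) hist \<Rightarrow> 'k" where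
  "compr iota1 iota i h = kseq iota1 iota i (fst h) (snd h) (length (snd h))"

text \<open>Unilaterally sufficient information, with witnesses F (depending only on g^i,
  i.e. F takes player i's strategy) and Phi (depending only on g^{-i}).  Distributions on
  H_t^{-i} are represented as distributions on extensional functions on -{i} (PiE).\<close>
definition usi_funs ::
  "nat \<Rightarrow> (nat \<Rightarrow> 'p \<Rightarrow> 'u set) \<Rightarrow> ('x \<times> ('p \<Rightarrow> 'h)) pmf
   \<Rightarrow> (nat \<Rightarrow> 'x \<Rightarrow> ('p::finite \<Rightarrow> 'u) \<Rightarrow> 'w \<Rightarrow> 'x \<times> ('p \<Rightarrow> 'z) \<times> ('p \<Rightarrow> real))
   \<Rightarrow> (nat \<Rightarrow> 'w pmf) \<Rightarrow> ('p \<Rightarrow> 'h \<Rightarrow> 'k) \<Rightarrow> (nat \<Rightarrow> 'p \<Rightarrow> 'k \<Rightarrow> 'z \<Rightarrow> 'k) \<Rightarrow> 'p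
   \<Rightarrow> ((nat \<Rightarrow> ('h, 'z) hist \<Rightarrow> 'u pmf) \<Rightarrow> nat \<Rightarrow> 'k \<Rightarrow> ('h, 'z) hist pmf)
   \<Rightarrow> (('p \<Rightarrow> nat \<Rightarrow> ('h, 'z) hist \<Rightarrow> 'u pmf) \<Rightarrow> nat \<Rightarrow> 'k \<Rightarrow> ('x \<times> ('p \<Rightarrow> ('h, 'z) hist)) pmf)
   \<Rightarrow> bool" where
  "usi_funs T A P0 f PW iota1 iota i F Phi \<longleftrightarrow>
     (\<forall>g g'. (\<forall>j. j \<noteq> i \<longrightarrow> g j = g' j) \<longrightarrow> Phi g = Phi g') \<and>
     (\<forall>gi t k. t \<in> {1..T} \<longrightarrow> set_pmf (F gi t k) \<subseteq> Hset t) \<and>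
     (\<forall>g t k. t \<in> {1..T} \<longrightarrow>
        set_pmf (Phi g t k) \<subseteq> UNIV \<times> (PiE (- {i}) (\<lambda>_. Hset t))) \<and>
     (\<forall>g. behavioral A g \<longrightarrow> (\<forall>t \<in> {1..T}. \<forall>k.
        let S = {(x, h). compr iota1 iota i (h i) = k} in
        set_pmf (XH P0 f PW g t) \<inter> S \<noteq> {} \<longrightarrow>
        (\<forall>x h. (\<forall>j. h j \<in> Hset t) \<longrightarrow>
           pmf (cond_pmf (XH P0 f PW g t) S) (x, h)
             = pmf (F (g i) t k) (h i) * pmf (Phi g t k) (x, restrict h (- {i})))))"

definition USI ::
  "nat \<Rightarrow> (nat \<Rightarrow> 'p \<Rightarrow> 'u set) \<Rightarrow> ('x \<times> ('p \<Rightarrow> 'h)) pmf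
   \<Rightarrow> (nat \<Rightarrow> 'x \<Rightarrow> ('p::finite \<Rightarrow> 'u) \<Rightarrow> 'w \<Rightarrow> 'x \<times> ('p \<Rightarrow> 'z) \<times> ('p \<Rightarrow> real))
   \<Rightarrow> (nat \<Rightarrow> 'w pmf) \<Rightarrow> ('p \<Rightarrow> 'h \<Rightarrow> 'k) \<Rightarrow> (nat \<Rightarrow> 'p \<Rightarrow> 'k \<Rightarrow> 'z \<Rightarrow> 'k) \<Rightarrow> 'p \<Rightarrow> bool" where
  "USI T A P0 f PW iota1 iota i \<longleftrightarrow> (\<exists>F Phi. usi_funs T A P0 f PW iota1 iota i F Phi)"

definition rho_of ::
  "((nat \<Rightarrow> ('h, 'z) hist \<Rightarrow> 'u pmf) \<Rightarrow> nat \<Rightarrow> 'k \<Rightarrow> ('h, 'z) hist pmf)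
   \<Rightarrow> (nat \<Rightarrow> ('h, 'z) hist \<Rightarrow> 'u pmf) \<Rightarrow> nat \<Rightarrow> 'k \<Rightarrow> 'u pmf" where
  "rho_of F gi t k = bind_pmf (F gi t k) (gi t)"

definition kbased ::
  "('p \<Rightarrow> 'h \<Rightarrow> 'k) \<Rightarrow> (nat \<Rightarrow> 'p \<Rightarrow> 'k \<Rightarrow> 'z \<Rightarrow> 'k) \<Rightarrow> 'p
   \<Rightarrow> (nat \<Rightarrow> 'k \<Rightarrow> 'u pmf) \<Rightarrow> nat \<Rightarrow> ('h, 'z) hist \<Rightarrow> 'u pmf" where
  "kbased iota1 iota i rho t h = rho t (compr iota1 iota i h)"

end

theory Submission
  imports Defs
begin

(* Follow the view V_t = (X_t, H_t^{-i}, K_t^i) jointly with the action profile U_t.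
   The law of (V_t, U_t) determines the law of V_{t+1} and the expected rewards at time t,
   so two strategy profiles that draw U_t from the same kernel given V_t have equal payoffs.
   Under (rho^i, g^{-i}) player i acts by rho_t^i(. | K_t^i) by construction.  Under g,
   unilateral sufficiency says that given K_t^i = k the history H_t^i is independent of
   (X_t, H_t^{-i}) with law F_t^{i,g^i}(. | k), so player i's action given V_t is again
   distributed as the F-average of g_t^i, which is rho_t^i(. | k). *)

lemma Pi_pmf_bind_coordinate:
  fixes i :: "'p::finite"
  shows "bind_pmf A (\<lambda>a. Pi_pmf UNIV d (\<lambda>j. if j = i then q a else r j))
       = Pi_pmf UNIV d (\<lambda>j. if j = i then bind_pmf A q else r j)"
proof -
  have UNIV_eq: "(UNIV :: 'p set) = insert i (- {i})" by auto
  have others: "Pi_pmf (- {i}) d (\<lambda>j. if j = i then p else r j) = Pi_pmf (- {i}) d r" for p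
    by (rule Pi_pmf_cong) auto
  show ?thesis
    unfolding UNIV_eq by (simp add: Pi_pmf_insert' others bind_assoc_pmf)
qed

lemma pmf_map_inj_on_superset:
  assumes "inj_on f D" "set_pmf M \<subseteq> D" "a \<in> D"
  shows "pmf (map_pmf f M) (f a) = pmf M a"
proof (cases "a \<in> set_pmf M")
  case True
  then show ?thesis using assms by (simp add: pmf_map_inj inj_on_subset)
next
  case False
  then have "f a \<notin> set_pmf (map_pmf f M)"
    using assms by (auto dest: inj_onD)
  with False show ?thesis by (simp add: set_pmf_eq)
qed

(* Given kappa y = k, y is assembled by c from independent a ~ P k and b ~ F k, which pi and
   sigma recover; hence given (pi y, kappa y) the value sigma y is distributed as F (kappa y). *)
lemma bind_pmf_conditionally_independent:
  fixes M :: "'y pmf" and \<kappa> :: "'y \<Rightarrow> 'k" and c :: "'a \<times> 'b \<Rightarrow> 'y"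
  assumes cond: "\<And>k. k \<in> set_pmf (map_pmf \<kappa> M) \<Longrightarrow>
      cond_pmf M {y. \<kappa> y = k} = map_pmf c (pair_pmf (P k) (F k))"
    and recover: "\<And>k a b. k \<in> set_pmf (map_pmf \<kappa> M) \<Longrightarrow> a \<in> set_pmf (P k) \<Longrightarrow>
      b \<in> set_pmf (F k) \<Longrightarrow> \<pi> (c (a, b)) = a \<and> \<sigma> (c (a, b)) = b"
  shows "bind_pmf M (\<lambda>y. Q (\<pi> y, \<kappa> y) (\<sigma> y))
       = bind_pmf (map_pmf (\<lambda>y. (\<pi> y, \<kappa> y)) M) (\<lambda>(a, k). bind_pmf (F k) (Q (a, k)))"
proof -
  define K where "K = map_pmf \<kappa> M"
  have disintegration: "bind_pmf K (\<lambda>k. cond_pmf M {y. \<kappa> y = k}) = M"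
    unfolding K_def by (rule bind_cond_pmf_cancel) (auto simp: vimage_def)
  have fibre: "bind_pmf (cond_pmf M {y. \<kappa> y = k}) (\<lambda>y. N (\<pi> y, \<kappa> y) (\<sigma> y))
      = bind_pmf (P k) (\<lambda>a. bind_pmf (F k) (N (a, k)))"
    if k: "k \<in> set_pmf K" for k and N :: "'a \<times> 'k \<Rightarrow> 'b \<Rightarrow> 'c pmf"
  proof -
    from k have k': "k \<in> set_pmf (map_pmf \<kappa> M)" by (simp add: K_def)
    then have "set_pmf M \<inter> {y. \<kappa> y = k} \<noteq> {}" by auto
    then have "bind_pmf (cond_pmf M {y. \<kappa> y = k}) (\<lambda>y. N (\<pi> y, \<kappa> y) (\<sigma> y))
        = bind_pmf (cond_pmf M {y. \<kappa> y = k}) (\<lambda>y. N (\<pi> y, k) (\<sigma> y))"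
      by (intro bind_pmf_cong) auto
    also have "\<dots> = bind_pmf (pair_pmf (P k) (F k)) (\<lambda>(a, b). N (\<pi> (c (a, b)), k) (\<sigma> (c (a, b))))"
      by (simp add: cond[OF k'] bind_map_pmf case_prod_beta')
    also have "\<dots> = bind_pmf (pair_pmf (P k) (F k)) (\<lambda>(a, b). N (a, k) b)"
      by (intro bind_pmf_cong) (auto dest: recover[OF k'])
    also have "\<dots> = bind_pmf (P k) (\<lambda>a. bind_pmf (F k) (N (a, k)))"
      by (simp add: pair_pmf_def bind_assoc_pmf bind_return_pmf)
    finally show ?thesis .
  qed
  have disintegrated: "bind_pmf M (\<lambda>y. N (\<pi> y, \<kappa> y) (\<sigma> y))
      = bind_pmf K (\<lambda>k. bind_pmf (P k) (\<lambda>a. bind_pmf (F k) (N (a, k))))"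
    for N :: "'a \<times> 'k \<Rightarrow> 'b \<Rightarrow> 'c pmf"
    by (subst disintegration[symmetric]) (simp add: bind_assoc_pmf fibre cong: bind_pmf_cong)
  show ?thesis
    using disintegrated[of Q] disintegrated[of "\<lambda>v _. case v of (a, k) \<Rightarrow> bind_pmf (F k) (Q (a, k))"]
    by (simp add: bind_map_pmf)
qed

lemma inj_on_fun_upd_extensional:
  "inj_on (\<lambda>((x, h), b). (x, h(i := b))) ((UNIV \<times> extensional (- {i})) \<times> UNIV)"
proof (rule inj_onI, clarsimp)
  fix h1 h2 b1 b2
  assume ext: "h1 \<in> extensional (- {i})" "h2 \<in> extensional (- {i})"
    and eq: "h1(i := b1) = h2(i := b2)"
  show "h1 = h2 \<and> b1 = b2"
  proof
    show "b1 = b2" using fun_upd_same eq by metis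
    show "h1 = h2"
    proof
      fix j show "h1 j = h2 j"
        using ext eq fun_upd_other[of j i h1 b1] fun_upd_other[of j i h2 b2]
        by (cases "j = i") (auto simp: extensional_def)
    qed
  qed
qed

lemma cond_pmf_eq_pair_if_factorises:
  fixes M :: "('x \<times> ('p \<Rightarrow> 'a)) pmf" and i :: 'p
  assumes M: "\<And>x h j. (x, h) \<in> set_pmf M \<Longrightarrow> h j \<in> H"
    and F: "set_pmf F \<subseteq> H"
    and P: "set_pmf P \<subseteq> UNIV \<times> PiE (- {i}) (\<lambda>_. H)"
    and S: "set_pmf M \<inter> S \<noteq> {}"
    and factorises: "\<And>x h. \<forall>j. h j \<in> H \<Longrightarrow>
      pmf (cond_pmf M S) (x, h) = pmf F (h i) * pmf P (x, restrict h (- {i}))"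
  shows "cond_pmf M S = map_pmf (\<lambda>((x, h'), b). (x, h'(i := b))) (pair_pmf P F)"
proof (rule pmf_eqI)
  fix y :: "'x \<times> ('p \<Rightarrow> 'a)"
  obtain x h where y: "y = (x, h)" by (cases y)
  let ?c = "\<lambda>((x, h'), b). (x, h'(i := b)) :: 'x \<times> ('p \<Rightarrow> 'a)"
  let ?D = "(UNIV \<times> extensional (- {i})) \<times> (UNIV :: 'a set)"
  let ?a = "((x, restrict h (- {i})), h i)"
  have "inj_on ?c ?D" by (rule inj_on_fun_upd_extensional)
  moreover have "set_pmf (pair_pmf P F) \<subseteq> ?D"
    using P by (auto simp: PiE_def)
  moreover have "?a \<in> ?D" by simp
  ultimately have "pmf (map_pmf ?c (pair_pmf P F)) (?c ?a) = pmf (pair_pmf P F) ?a"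
    by (rule pmf_map_inj_on_superset)
  moreover have "?c ?a = y"
    by (simp add: y fun_eq_iff)
  ultimately have "pmf (map_pmf ?c (pair_pmf P F)) y = pmf P (x, restrict h (- {i})) * pmf F (h i)"
    by (simp add: pmf_pair)
  moreover have "pmf (cond_pmf M S) y = pmf P (x, restrict h (- {i})) * pmf F (h i)"
  proof (cases "\<forall>j. h j \<in> H")
    case True
    then show ?thesis by (simp add: y factorises)
  next
    case False
    then obtain j where j: "h j \<notin> H" by blast
    then have "pmf (cond_pmf M S) y = 0"
      using M S y by (auto simp: pmf_eq_0_set_pmf)
    moreover have "pmf P (x, restrict h (- {i})) = 0 \<or> pmf F (h i) = 0"
    proof (cases "j = i")
      case True
      then have "h i \<notin> set_pmf F" using j F by blast
      then show ?thesis by (simp add: pmf_eq_0_set_pmf)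
    next
      case False
      then have "restrict h (- {i}) \<notin> PiE (- {i}) (\<lambda>_. H)" using j by (auto simp: PiE_iff)
      then have "(x, restrict h (- {i})) \<notin> set_pmf P" using P by blast
      then show ?thesis by (simp add: pmf_eq_0_set_pmf)
    qed
    ultimately show ?thesis by auto
  qed
  ultimately show "pmf (cond_pmf M S) y = pmf (map_pmf ?c (pair_pmf P F)) y" by simp
qed

lemma expectation_bind_pmf_finite:
  fixes \<phi> :: "'b \<Rightarrow> real"
  assumes "finite (set_pmf M)" "\<And>a. a \<in> set_pmf M \<Longrightarrow> finite (set_pmf (K a))"
  shows "measure_pmf.expectation (bind_pmf M K) \<phi>
       = measure_pmf.expectation M (\<lambda>a. measure_pmf.expectation (K a) \<phi>)"
  using pmf_expectation_bind[OF assms(1) assms(2) subset_refl, where h = \<phi>]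
    integral_measure_pmf[OF assms(1), of M "\<lambda>a. measure_pmf.expectation (K a) \<phi>"]
  by simp

lemma expectation_add_const_finite:
  fixes \<phi> :: "'b \<Rightarrow> real"
  assumes "finite (set_pmf M)"
  shows "measure_pmf.expectation M (\<lambda>a. c + \<phi> a) = c + measure_pmf.expectation M \<phi>"
  using assms by (subst Bochner_Integration.integral_add) (auto intro: integrable_measure_pmf_finite)

lemma compr_snoc:
  "compr iota1 iota i (h1, zs @ [z]) = iota (Suc (Suc (length zs))) i (compr iota1 iota i (h1, zs)) z"
proof -
  have "n \<le> length zs \<Longrightarrow> kseq iota1 iota i h1 (zs @ [z]) n = kseq iota1 iota i h1 zs n" for n
    by (induction n) (auto simp: nth_append)
  then show ?thesis by (simp add: compr_def)
qed

lemma length_history_run: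
  "(x, h, c) \<in> set_pmf (run P0 f PW p n) \<Longrightarrow> length (snd (h j)) = n"
proof (induction n arbitrary: x h c)
  case 0
  then show ?case by (auto simp: init_state_def)
next
  case (Suc n)
  then obtain x0 h0 c0 where run: "(x0, h0, c0) \<in> set_pmf (run P0 f PW p n)"
    and "(x, h, c) \<in> set_pmf (step f PW p (Suc n) (x0, h0, c0))"
    by auto
  then obtain u w where "(x, h, c) \<in> set_pmf (case f (Suc n) x0 u w of (x', z, r) \<Rightarrow>
            return_pmf (x', \<lambda>i. (fst (h0 i), snd (h0 i) @ [z i]), \<lambda>i. c0 i + r i))"
    unfolding step_def by (simp only: prod.case set_bind_pmf) blast
  with Suc.IH[OF run] show ?case
    by (cases "f (Suc n) x0 u w") simp
qed

lemma set_pmf_XH_Hset: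
  "(x, h) \<in> set_pmf (XH P0 f PW p t) \<Longrightarrow> h j \<in> Hset t"
  by (auto simp: XH_def Hset_def dest: length_history_run)

lemma finite_set_pmf_step:
  fixes f :: "nat \<Rightarrow> 'x \<Rightarrow> ('p::finite \<Rightarrow> 'u::finite) \<Rightarrow> 'w::finite \<Rightarrow> 'x \<times> ('p \<Rightarrow> 'z) \<times> ('p \<Rightarrow> real)"
  shows "finite (set_pmf (step f PW p t s))"
  by (auto simp: step_def split: prod.splits)

lemma finite_set_pmf_run:
  fixes P0 :: "('x::finite \<times> ('p::finite \<Rightarrow> 'h::finite)) pmf"
    and f :: "nat \<Rightarrow> 'x \<Rightarrow> ('p \<Rightarrow> 'u::finite) \<Rightarrow> 'w::finite \<Rightarrow> 'x \<times> ('p \<Rightarrow> 'z) \<times> ('p \<Rightarrow> real)"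
  shows "finite (set_pmf (run P0 f PW p n))"
  by (induction n) (simp_all add: init_state_def finite_set_pmf_step)

lemma expectation_step:
  fixes f :: "nat \<Rightarrow> 'x \<Rightarrow> ('p::finite \<Rightarrow> 'u::finite) \<Rightarrow> 'w::finite \<Rightarrow> 'x \<times> ('p \<Rightarrow> 'z) \<times> ('p \<Rightarrow> real)"
  shows "measure_pmf.expectation (step f PW p t (x, h, c)) (\<lambda>(x, h, c). c j)
       = c j + measure_pmf.expectation (Pi_pmf UNIV undefined (\<lambda>l. p l t (h l)))
                 (\<lambda>u. measure_pmf.expectation (PW t) (\<lambda>w. snd (snd (f t x u w)) j))"
proof -
  have "measure_pmf.expectation (case f t x u w of (x', z, r) \<Rightarrow>
            return_pmf (x', \<lambda>i. (fst (h i), snd (h i) @ [z i]), \<lambda>i. c i + r i)) (\<lambda>(x, h, c). c j)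
        = c j + snd (snd (f t x u w)) j" for u w
    by (cases "f t x u w") simp
  then have "measure_pmf.expectation (step f PW p t (x, h, c)) (\<lambda>(x, h, c). c j)
      = measure_pmf.expectation (Pi_pmf UNIV undefined (\<lambda>l. p l t (h l)))
          (\<lambda>u. measure_pmf.expectation (PW t) (\<lambda>w. c j + snd (snd (f t x u w)) j))"
    unfolding step_def by (simp add: expectation_bind_pmf_finite split: prod.split)
  then show ?thesis by (simp add: expectation_add_const_finite)
qed

type_synonym ('x, 'p, 'h, 'z, 'k) view = "('x \<times> ('p \<Rightarrow> ('h, 'z) hist)) \<times> 'k"

locale compressed_game =
  fixes P0 :: "('x::finite \<times> ('p::finite \<Rightarrow> 'h::finite)) pmf"
    and f :: "nat \<Rightarrow> 'x \<Rightarrow> ('p \<Rightarrow> 'u::finite) \<Rightarrow> 'w::finite \<Rightarrow> 'x \<times> ('p \<Rightarrow> 'z) \<times> ('p \<Rightarrow> real)"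
    and PW :: "nat \<Rightarrow> 'w pmf"
    and iota1 :: "'p \<Rightarrow> 'h \<Rightarrow> 'k"
    and iota :: "nat \<Rightarrow> 'p \<Rightarrow> 'k \<Rightarrow> 'z \<Rightarrow> 'k"
    and i :: 'p
begin

definition view :: "'x \<times> ('p \<Rightarrow> ('h, 'z) hist) \<Rightarrow> ('x, 'p, 'h, 'z, 'k) view" where
  "view = (\<lambda>(x, h). ((x, restrict h (- {i})), compr iota1 iota i (h i)))"

definition view_action ::
  "('p \<Rightarrow> nat \<Rightarrow> ('h, 'z) hist \<Rightarrow> 'u pmf) \<Rightarrow> nat \<Rightarrow> (('x, 'p, 'h, 'z, 'k) view \<times> ('p \<Rightarrow> 'u)) pmf" where
  "view_action p t = bind_pmf (XH P0 f PW p t)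
     (\<lambda>(x, h). map_pmf (\<lambda>u. (view (x, h), u)) (Pi_pmf UNIV undefined (\<lambda>j. p j t (h j))))"

definition next_view ::
  "nat \<Rightarrow> (('x, 'p, 'h, 'z, 'k) view \<times> ('p \<Rightarrow> 'u)) \<times> 'w \<Rightarrow> ('x, 'p, 'h, 'z, 'k) view" where
  "next_view t = (\<lambda>((((x, h), k), u), w). case f t x u w of (x', z, r) \<Rightarrow>
     ((x', restrict (\<lambda>j. (fst (h j), snd (h j) @ [z j])) (- {i})), iota (Suc t) i k (z i)))"

definition expected_reward :: "'p \<Rightarrow> nat \<Rightarrow> ('x, 'p, 'h, 'z, 'k) view \<times> ('p \<Rightarrow> 'u) \<Rightarrow> real" where
  "expected_reward j t =
     (\<lambda>(((x, _), _), u). measure_pmf.expectation (PW t) (\<lambda>w. snd (snd (f t x u w)) j))"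

definition action_kernel ::
  "(nat \<Rightarrow> 'k \<Rightarrow> 'u pmf) \<Rightarrow> ('p \<Rightarrow> nat \<Rightarrow> ('h, 'z) hist \<Rightarrow> 'u pmf) \<Rightarrow> nat
   \<Rightarrow> ('x, 'p, 'h, 'z, 'k) view \<Rightarrow> (('x, 'p, 'h, 'z, 'k) view \<times> ('p \<Rightarrow> 'u)) pmf" where
  "action_kernel \<rho> g t = (\<lambda>((x, h), k). map_pmf (\<lambda>u. (((x, h), k), u))
     (Pi_pmf UNIV undefined (\<lambda>j. if j = i then \<rho> t k else g j t (h j))))"

lemma map_view_step:
  assumes "length (snd (h i)) = n"
  shows "map_pmf (\<lambda>(x', h', c'). view (x', h')) (step f PW p (Suc n) (x, h, c))
       = bind_pmf (Pi_pmf UNIV undefined (\<lambda>j. p j (Suc n) (h j)))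
           (\<lambda>u. map_pmf (\<lambda>w. next_view (Suc n) ((view (x, h), u), w)) (PW (Suc n)))"
proof -
  have "map_pmf (\<lambda>(x', h', c'). view (x', h')) (case f (Suc n) x u w of (x', z, r) \<Rightarrow>
          return_pmf (x', \<lambda>j. (fst (h j), snd (h j) @ [z j]), \<lambda>j. c j + r j))
        = return_pmf (next_view (Suc n) ((view (x, h), u), w))" for u w
    using assms
    by (cases "f (Suc n) x u w") (auto simp: view_def next_view_def compr_snoc restrict_def fun_eq_iff)
  then show ?thesis
    unfolding step_def by (simp add: map_bind_pmf, simp add: map_pmf_def)
qed

lemma map_view_XH_Suc:
  "map_pmf view (XH P0 f PW p (Suc (Suc n)))
   = map_pmf (next_view (Suc n))
       (bind_pmf (view_action p (Suc n)) (\<lambda>vu. map_pmf (\<lambda>w. (vu, w)) (PW (Suc n))))"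
proof -
  have "map_pmf view (XH P0 f PW p (Suc (Suc n)))
      = bind_pmf (run P0 f PW p n) (\<lambda>(x, h, c). map_pmf (\<lambda>(x', h', c'). view (x', h')) (step f PW p (Suc n) (x, h, c)))"
    by (simp add: XH_def map_bind_pmf map_pmf_comp case_prod_beta')
  also have "\<dots> = bind_pmf (run P0 f PW p n) (\<lambda>(x, h, c). bind_pmf (Pi_pmf UNIV undefined (\<lambda>j. p j (Suc n) (h j)))
           (\<lambda>u. map_pmf (\<lambda>w. next_view (Suc n) ((view (x, h), u), w)) (PW (Suc n))))"
    by (intro bind_pmf_cong) (auto simp: map_view_step length_history_run)
  also have "\<dots> = map_pmf (next_view (Suc n))
       (bind_pmf (view_action p (Suc n)) (\<lambda>vu. map_pmf (\<lambda>w. (vu, w)) (PW (Suc n))))"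
    by (simp add: view_action_def XH_def map_bind_pmf bind_map_pmf bind_assoc_pmf map_pmf_comp case_prod_beta')
  finally show ?thesis .
qed

lemma expectation_reward_run_Suc:
  "measure_pmf.expectation (run P0 f PW p (Suc n)) (\<lambda>(x, h, c). c j)
   = measure_pmf.expectation (run P0 f PW p n) (\<lambda>(x, h, c). c j)
     + measure_pmf.expectation (view_action p (Suc n)) (expected_reward j (Suc n))"
proof -
  let ?R = "\<lambda>(x, h). measure_pmf.expectation (Pi_pmf UNIV undefined (\<lambda>l. p l (Suc n) (h l)))
              (\<lambda>u. measure_pmf.expectation (PW (Suc n)) (\<lambda>w. snd (snd (f (Suc n) x u w)) j))"
  have run: "finite (set_pmf (run P0 f PW p n))" by (rule finite_set_pmf_run)
  have "measure_pmf.expectation (run P0 f PW p (Suc n)) (\<lambda>(x, h, c). c j)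
      = measure_pmf.expectation (run P0 f PW p n)
          (\<lambda>s. measure_pmf.expectation (step f PW p (Suc n) s) (\<lambda>(x, h, c). c j))"
    by (simp add: expectation_bind_pmf_finite run finite_set_pmf_step)
  also have "\<dots> = measure_pmf.expectation (run P0 f PW p n) (\<lambda>(x, h, c). c j + ?R (x, h))"
  proof (rule Bochner_Integration.integral_cong)
    fix s :: "'x \<times> ('p \<Rightarrow> ('h, 'z) hist) \<times> ('p \<Rightarrow> real)"
    show "measure_pmf.expectation (step f PW p (Suc n) s) (\<lambda>(x, h, c). c j)
        = (case s of (x, h, c) \<Rightarrow> c j + ?R (x, h))"
      by (cases s) (simp add: expectation_step)
  qed simp
  also have "\<dots> = measure_pmf.expectation (run P0 f PW p n) (\<lambda>(x, h, c). c j)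
      + measure_pmf.expectation (run P0 f PW p n) (\<lambda>(x, h, c). ?R (x, h))"
    unfolding case_prod_beta'
    by (rule Bochner_Integration.integral_add) (auto intro: integrable_measure_pmf_finite[OF run])
  also have "measure_pmf.expectation (run P0 f PW p n) (\<lambda>(x, h, c). ?R (x, h))
      = measure_pmf.expectation (view_action p (Suc n)) (expected_reward j (Suc n))"
    by (simp add: view_action_def XH_def expected_reward_def view_def expectation_bind_pmf_finite run
        case_prod_beta')
  finally show ?thesis .
qed

lemma payoff_eq_if_common_action_kernel:
  assumes p: "\<And>t. t \<in> {1..T} \<Longrightarrow> view_action p t = bind_pmf (map_pmf view (XH P0 f PW p t)) (K t)"
    and p': "\<And>t. t \<in> {1..T} \<Longrightarrow> view_action p' t = bind_pmf (map_pmf view (XH P0 f PW p' t)) (K t)"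
  shows "payoff T P0 f PW p j = payoff T P0 f PW p' j"
proof -
  have views: "map_pmf view (XH P0 f PW p (Suc n)) = map_pmf view (XH P0 f PW p' (Suc n))"
    if "n < T" for n
    using that
  proof (induction n)
    case 0
    show ?case by (simp add: XH_def)
  next
    case (Suc n)
    then have "view_action p (Suc n) = view_action p' (Suc n)" using p p' by simp
    then show ?case by (simp add: map_view_XH_Suc)
  qed
  have actions: "view_action p (Suc n) = view_action p' (Suc n)" if "n < T" for n
    using p p' views that by simp
  have "measure_pmf.expectation (run P0 f PW p n) (\<lambda>(x, h, c). c j)
      = measure_pmf.expectation (run P0 f PW p' n) (\<lambda>(x, h, c). c j)" if "n \<le> T" for n
    using that
  proof (induction n)
    case (Suc n)
    then show ?case by (simp del: run.simps add: expectation_reward_run_Suc actions)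
  qed simp
  then show ?thesis by (simp add: payoff_def)
qed

lemma view_action_kbased:
  "view_action (g(i := kbased iota1 iota i \<rho>)) t
   = bind_pmf (map_pmf view (XH P0 f PW (g(i := kbased iota1 iota i \<rho>)) t)) (action_kernel \<rho> g t)"
proof -
  have "Pi_pmf UNIV undefined (\<lambda>j. (g(i := kbased iota1 iota i \<rho>)) j t (h j))
      = Pi_pmf UNIV undefined
          (\<lambda>j. if j = i then \<rho> t (compr iota1 iota i (h i)) else g j t (restrict h (- {i}) j))" for h
    by (rule Pi_pmf_cong) (auto simp: kbased_def)
  then show ?thesis
    unfolding view_action_def bind_map_pmf
    by (intro bind_pmf_cong) (auto simp: view_def action_kernel_def)
qed

lemma action_kernel_rho_of:
  "action_kernel (rho_of F (g i)) g t ((x, h), k)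
   = bind_pmf (F (g i) t k) (\<lambda>b. map_pmf (\<lambda>u. (((x, h), k), u))
       (Pi_pmf UNIV undefined (\<lambda>j. if j = i then g i t b else g j t (h j))))"
  unfolding action_kernel_def rho_of_def
  by (simp add: map_bind_pmf[symmetric] Pi_pmf_bind_coordinate)

lemma cond_pmf_XH_usi:
  assumes usi: "usi_funs T A P0 f PW iota1 iota i F Phi"
    and beh: "behavioral A g"
    and t: "t \<in> {1..T}"
    and k: "k \<in> set_pmf (map_pmf (\<lambda>(x, h). compr iota1 iota i (h i)) (XH P0 f PW g t))"
  shows "cond_pmf (XH P0 f PW g t) {(x, h). compr iota1 iota i (h i) = k}
       = map_pmf (\<lambda>((x, h'), b). (x, h'(i := b))) (pair_pmf (Phi g t k) (F (g i) t k))"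
proof (rule cond_pmf_eq_pair_if_factorises[where H = "Hset t"])
  show "(x, h) \<in> set_pmf (XH P0 f PW g t) \<Longrightarrow> h j \<in> Hset t" for x h j
    by (rule set_pmf_XH_Hset)
  show "set_pmf (F (g i) t k) \<subseteq> Hset t"
    and "set_pmf (Phi g t k) \<subseteq> UNIV \<times> PiE (- {i}) (\<lambda>_. Hset t)"
    using usi t by (auto simp: usi_funs_def)
  show nonempty: "set_pmf (XH P0 f PW g t) \<inter> {(x, h). compr iota1 iota i (h i) = k} \<noteq> {}"
    using k by auto
  show "pmf (cond_pmf (XH P0 f PW g t) {(x, h). compr iota1 iota i (h i) = k}) (x, h)
      = pmf (F (g i) t k) (h i) * pmf (Phi g t k) (x, restrict h (- {i}))"
    if "\<forall>j. h j \<in> Hset t" for x h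
    using usi beh t that nonempty unfolding usi_funs_def Let_def by blast
qed

lemma view_action_usi:
  assumes usi: "usi_funs T A P0 f PW iota1 iota i F Phi"
    and beh: "behavioral A g"
    and t: "t \<in> {1..T}"
  shows "view_action g t
       = bind_pmf (map_pmf view (XH P0 f PW g t)) (action_kernel (rho_of F (g i)) g t)"
proof -
  let ?M = "XH P0 f PW g t"
  let ?\<pi> = "\<lambda>(x, h). (x, restrict h (- {i}))"
  let ?\<kappa> = "\<lambda>(x, h). compr iota1 iota i (h i)"
  let ?\<sigma> = "\<lambda>(x, h). h i"
  let ?c = "\<lambda>((x, h'), b). (x, h'(i := b))"
  let ?Q = "\<lambda>((x, h'), k) b. map_pmf (\<lambda>u. (((x, h'), k), u))
              (Pi_pmf UNIV undefined (\<lambda>j. if j = i then g i t b else g j t (h' j)))"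
  have cond: "cond_pmf ?M {y. ?\<kappa> y = k} = map_pmf ?c (pair_pmf (Phi g t k) (F (g i) t k))"
    if "k \<in> set_pmf (map_pmf ?\<kappa> ?M)" for k
  proof -
    have fibre: "{y. ?\<kappa> y = k} = {(x, h). compr iota1 iota i (h i) = k}" by auto
    show ?thesis unfolding fibre by (rule cond_pmf_XH_usi[OF usi beh t that])
  qed
  have recover: "?\<pi> (?c (a, b)) = a \<and> ?\<sigma> (?c (a, b)) = b" if "a \<in> set_pmf (Phi g t k)" for a b k
  proof -
    have "set_pmf (Phi g t k) \<subseteq> UNIV \<times> PiE (- {i}) (\<lambda>_. Hset t)"
      using usi t by (simp add: usi_funs_def)
    with that have "snd a \<in> PiE (- {i}) (\<lambda>_. Hset t)" by (cases a) auto
    then have "snd a \<in> extensional (- {i})" by (simp add: PiE_iff)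
    then show ?thesis by (cases a) (auto simp: extensional_def fun_eq_iff)
  qed
  have "view_action g t = bind_pmf ?M (\<lambda>y. ?Q (?\<pi> y, ?\<kappa> y) (?\<sigma> y))"
  proof -
    have "Pi_pmf UNIV undefined (\<lambda>j. g j t (h j))
        = Pi_pmf UNIV undefined (\<lambda>j. if j = i then g i t (h i) else g j t (restrict h (- {i}) j))" for h
      by (rule Pi_pmf_cong) auto
    then show ?thesis
      unfolding view_action_def by (intro bind_pmf_cong) (auto simp: view_def)
  qed
  also have "\<dots> = bind_pmf (map_pmf (\<lambda>y. (?\<pi> y, ?\<kappa> y)) ?M)
                      (\<lambda>(a, k). bind_pmf (F (g i) t k) (?Q (a, k)))"
    by (rule bind_pmf_conditionally_independent[OF cond recover])
  also have "\<dots> = bind_pmf (map_pmf view ?M) (action_kernel (rho_of F (g i)) g t)"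
  proof -
    have "(\<lambda>y. (?\<pi> y, ?\<kappa> y)) = view" by (auto simp: view_def)
    moreover have "(\<lambda>(a, k). bind_pmf (F (g i) t k) (?Q (a, k))) = action_kernel (rho_of F (g i)) g t"
      by (intro ext) (clarsimp simp: action_kernel_rho_of)
    ultimately show ?thesis by (simp only:)
  qed
  finally show ?thesis .
qed

end

theorem lemma5:
  fixes T :: nat
    and A :: "nat \<Rightarrow> 'p::finite \<Rightarrow> 'u::finite set"
    and P0 :: "('x::finite \<times> ('p \<Rightarrow> 'h::finite)) pmf"
    and f :: "nat \<Rightarrow> 'x \<Rightarrow> ('p \<Rightarrow> 'u) \<Rightarrow> 'w::finite \<Rightarrow> 'x \<times> ('p \<Rightarrow> 'z::finite) \<times> ('p \<Rightarrow> real)"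
    and PW :: "nat \<Rightarrow> 'w pmf"
    and act :: "nat \<Rightarrow> 'p \<Rightarrow> 'z \<Rightarrow> 'u"
    and iota1 :: "'p \<Rightarrow> 'h \<Rightarrow> 'k::finite"
    and iota :: "nat \<Rightarrow> 'p \<Rightarrow> 'k \<Rightarrow> 'z \<Rightarrow> 'k"
    and i :: 'p
    and F :: "(nat \<Rightarrow> ('h, 'z) hist \<Rightarrow> 'u pmf) \<Rightarrow> nat \<Rightarrow> 'k \<Rightarrow> ('h, 'z) hist pmf"
    and Phi :: "('p \<Rightarrow> nat \<Rightarrow> ('h, 'z) hist \<Rightarrow> 'u pmf) \<Rightarrow> nat \<Rightarrow> 'k \<Rightarrow> ('x \<times> ('p \<Rightarrow> ('h, 'z) hist)) pmf"
    and g :: "'p \<Rightarrow> nat \<Rightarrow> ('h, 'z) hist \<Rightarrow> 'u pmf"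
  assumes actions_nonempty: "\<forall>t \<in> {1..T}. \<forall>j. A t j \<noteq> {}"
    and reward_bound: "\<forall>t \<in> {1..T}. \<forall>x u w j. snd (snd (f t x u w)) j \<in> {-1..1}"
    and action_observed: "\<forall>t \<in> {1..T}. \<forall>x u w j. (\<forall>l. u l \<in> A t l) \<longrightarrow>
                            act t j (fst (snd (f t x u w)) j) = u j"
    and usi: "usi_funs T A P0 f PW iota1 iota i F Phi"
    and beh: "behavioral A g"
  shows "\<forall>j. payoff T P0 f PW g j
             = payoff T P0 f PW (g(i := kbased iota1 iota i (rho_of F (g i)))) j"
proof -
  interpret compressed_game P0 f PW iota1 iota i .
  have "payoff T P0 f PW g j = payoff T P0 f PW (g(i := kbased iota1 iota i (rho_of F (g i)))) j" for j
    by (rule payoff_eq_if_common_action_kernel[where K = "action_kernel (rho_of F (g i)) g"])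
      (simp_all add: view_action_usi[OF usi beh] view_action_kbased)
  then show ?thesis by blast
qed

end
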